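(* Let $P,Q,R\in D_P$ be pairwise distinct. Let $T_1,T_2\in S^1$ be the two endpoints at infinity of the hyperbolic line through $P$ and $Q$. Let $C_1,C_2$ be the two circular arcs in $D_P$ with endpoints $T_1,T_2$, lying on opposite sides of the hyperbolic line $PQ$, each meeting $S^1$ at $T_1$ and at $T_2$ with angle $2\arctan(e^{d(P,Q)})-\pi/2$. Let $\Theta$ be the open region of $D_P$ bounded by $C_1$ and $C_2$ (the region containing the hyperbolic line $PQ$). Let $m$ be the number of ideal triangles circumscribing $\triangle PQR$. Then $$m=\begin{cases}0 & \text{if } R\in\Theta,\\ 1 & \text{if } R\in C_1\cup C_2,\\ 2 & \text{if } R\in D_P\setminus \overline{\Theta}.\end{cases}$$
   Context: $D_P=\{z\in\mathbb{C}:|z|<1\}$ is the Poincaré disk with metric $ds^2=4\frac{dx^2+dy^2}{(1-x^2-y^2)^2}$ and boundary at infinity $S^1=\{|z|=1\}$; hyperbolic lines are arcs of circles or diameters orthogonal to $S^1$; $d$ is the hyperbolic distance, $d(P,Q)=\operatorname{arccosh}\left(1+\frac{2|P-Q|^2}{(1-|P|^2)(1-|Q|^2)}\right)$. An ideal triangle circumscribing $\triangle PQR$ is a triangle whose three vertices are distinct points of $S^1$ and whose sides are hyperbolic lines joining them, such that $P$, $Q$, $R$ lie on three distinct sides (one point on each side). *)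

theory Defs
  imports "HOL-Analysis.Analysis"
begin

definition PDisk :: "complex set" where
  "PDisk = {z. cmod z < 1}"

definition hdist :: "complex \<Rightarrow> complex \<Rightarrow> real" where
  "hdist P Q = arcosh (1 + 2 * (cmod (P - Q))^2 / ((1 - (cmod P)^2) * (1 - (cmod Q)^2)))"

text \<open>Generalized circle A|z|^2 + Re(conj B * z) + C = 0 (A = 0: straight line).
  It is a genuine circle of positive radius or a line iff |B|^2 > 4AC.\<close>
definition gcircle :: "real \<Rightarrow> complex \<Rightarrow> real \<Rightarrow> complex set" where
  "gcircle A B C = {z. A * (cmod z)^2 + Re (cnj B * z) + C = 0}"

definition gcircle_nondeg :: "real \<Rightarrow> complex \<Rightarrow> real \<Rightarrow> bool" where
  "gcircle_nondeg A B C \<longleftrightarrow> (cmod B)^2 > 4 * A * C"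

text \<open>Normal vector of gcircle A B C at z (the gradient of its defining function).\<close>
definition gcircle_normal :: "real \<Rightarrow> complex \<Rightarrow> complex \<Rightarrow> complex" where
  "gcircle_normal A B z = 2 * of_real A * z + B"

text \<open>(Unoriented) angle in [0, pi/2] between two curves with normal vectors n1, n2
  at a common point, i.e. the angle between their tangent lines.\<close>
definition curve_angle :: "complex \<Rightarrow> complex \<Rightarrow> real" where
  "curve_angle n1 n2 = arccos (\<bar>n1 \<bullet> n2\<bar> / (norm n1 * norm n2))"

text \<open>Hyperbolic line with ideal endpoints a, b: the part inside the disk of the
  circle or straight line through a and b orthogonal to the unit circle S^1
  (whose normal at a point T of S^1 is T).\<close>
definition hline :: "complex \<Rightarrow> complex \<Rightarrow> complex set" where
  "hline a b = {z \<in> PDisk. \<exists>A B C. gcircle_nondeg A B C \<and>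
      a \<in> gcircle A B C \<and> b \<in> gcircle A B C \<and> z \<in> gcircle A B C \<and>
      curve_angle (gcircle_normal A B a) a = pi / 2}"

definition angle_arcs :: "complex \<Rightarrow> complex \<Rightarrow> real \<Rightarrow> complex set" where
  "angle_arcs T1 T2 alpha = {z \<in> PDisk. \<exists>A B C. gcircle_nondeg A B C \<and>
      T1 \<in> gcircle A B C \<and> T2 \<in> gcircle A B C \<and> z \<in> gcircle A B C \<and>
      curve_angle (gcircle_normal A B T1) T1 = alpha \<and>
      curve_angle (gcircle_normal A B T2) T2 = alpha}"

text \<open>Ideal triangles (identified with their vertex sets) circumscribing triangle PQR:
  P, Q, R lie one on each of the three sides.\<close>
definition circ_ideal_triangles :: "complex \<Rightarrow> complex \<Rightarrow> complex \<Rightarrow> complex set set" where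
  "circ_ideal_triangles P Q R = {{u, v, w} | u v w.
      cmod u = 1 \<and> cmod v = 1 \<and> cmod w = 1 \<and> u \<noteq> v \<and> v \<noteq> w \<and> u \<noteq> w \<and>
      P \<in> hline u v \<and> Q \<in> hline v w \<and> R \<in> hline w u}"

end

theory Submission
  imports Defs
begin

(* A disk automorphism moves P to 0 and Q to a point s of (0,1); it preserves hyperbolic
  distance, hyperbolic lines, angle arcs and circumscribing ideal triangles, so it suffices to
  treat this normal position. There the line PQ is the real diameter, the arcs form the zero
  set of F(z) = (1 - s^2)^2 (1 - |z|^2)^2 - 16 s^2 (Im z)^2 (arc_discr), and \<Theta> is the
  star-shaped region F > 0. An ideal triangle with 0 and s on two of its sides has vertices
  -v, v and a third vertex w(v) determined by v; the third side passes through R iff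
  Re (a v) = c for a = vertex_coeff s R and c = vertex_const s R. A line meets the unit circle
  in 0, 1 or 2 points according to the sign of c - |a|, and 4 (c^2 - |a|^2) = F(R). *)

lemma Re_Im_sq_eq_1: "cmod z = 1 \<Longrightarrow> (Re z)^2 + (Im z)^2 = 1"
  by (metis cmod_power2 power_one)

lemma gcircle_nondeg_sqrt_pos: "gcircle_nondeg A B C \<Longrightarrow> sqrt ((cmod B)^2 - 4*A*C) > 0"
  unfolding gcircle_nondeg_def by simp

lemma curve_angle_gcircle_unit:
  assumes T: "cmod T = 1" and "T \<in> gcircle A B C" and nd: "gcircle_nondeg A B C"
  shows "curve_angle (gcircle_normal A B T) T = arccos (\<bar>A - C\<bar> / sqrt ((cmod B)^2 - 4*A*C))"
proof -
  have t: "(Re T)^2 + (Im T)^2 = 1" using T Re_Im_sq_eq_1 by blast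
  have "A * ((Re T)^2 + (Im T)^2) + (Re B * Re T + Im B * Im T) + C = 0"
    using assms(2) unfolding gcircle_def by (simp add: cmod_power2)
  then have BT: "Re B * Re T + Im B * Im T = -A - C" by (simp add: t)
  have "gcircle_normal A B T \<bullet> T = 2*A*((Re T)^2 + (Im T)^2) + (Re B * Re T + Im B * Im T)"
    unfolding gcircle_normal_def inner_complex_def by (simp add: algebra_simps power2_eq_square)
  then have inner: "gcircle_normal A B T \<bullet> T = A - C" using BT t by simp
  have "(norm (gcircle_normal A B T))^2
      = 4*A^2*((Re T)^2 + (Im T)^2) + 4*A*(Re B * Re T + Im B * Im T) + ((Re B)^2 + (Im B)^2)"
    unfolding gcircle_normal_def cmod_power2 by (simp add: algebra_simps power2_eq_square)
  also have "\<dots> = (cmod B)^2 - 4*A*C"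
    unfolding BT t cmod_power2 by (simp add: algebra_simps power2_eq_square)
  finally have "norm (gcircle_normal A B T) = sqrt ((cmod B)^2 - 4*A*C)"
    by (metis norm_ge_zero real_sqrt_unique)
  then show ?thesis unfolding curve_angle_def inner using T by simp
qed

lemma gcircle_unit_coeff_bound:
  assumes T: "cmod T = 1" and "T \<in> gcircle A B C"
  shows "\<bar>A - C\<bar> \<le> sqrt ((cmod B)^2 - 4*A*C)"
proof -
  have t: "(Re T)^2 + (Im T)^2 = 1" using T Re_Im_sq_eq_1 by blast
  have "A * ((Re T)^2 + (Im T)^2) + (Re B * Re T + Im B * Im T) + C = 0"
    using assms(2) unfolding gcircle_def by (simp add: cmod_power2)
  then have BT: "Re B * Re T + Im B * Im T = -A - C" by (simp add: t)
  have "(Re B * Re T + Im B * Im T)^2 \<le> ((Re B)^2 + (Im B)^2) * ((Re T)^2 + (Im T)^2)"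
    using sum_squares_ge_zero[of "Re B * Im T - Im B * Re T" 0]
    by (simp add: algebra_simps power2_eq_square)
  then have "(A + C)^2 \<le> (cmod B)^2"
    using BT t by (simp add: cmod_power2) (smt (verit) power2_minus)
  then have "(A - C)^2 \<le> (cmod B)^2 - 4*A*C" by (simp add: algebra_simps power2_eq_square)
  then show ?thesis by (metis real_le_rsqrt real_sqrt_abs power2_abs real_sqrt_le_mono)
qed

(* A generalized circle meets the unit circle under the same angle at every common point,
  with cosine |A - C| / sqrt(|B|^2 - 4AC); here the angle is given by its cosine r. *)
definition cos_angle_arcs :: "complex \<Rightarrow> complex \<Rightarrow> real \<Rightarrow> complex set" where
  "cos_angle_arcs a b r = {z \<in> PDisk. \<exists>A B C. gcircle_nondeg A B C \<and>
      a \<in> gcircle A B C \<and> b \<in> gcircle A B C \<and> z \<in> gcircle A B C \<and>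
      \<bar>A - C\<bar> = r * sqrt ((cmod B)^2 - 4*A*C)}"

lemma curve_angle_gcircle_unit_eq_iff:
  assumes "gcircle_nondeg A B C" "T \<in> gcircle A B C" "cmod T = 1" "0 \<le> \<alpha>" "\<alpha> \<le> pi"
  shows "curve_angle (gcircle_normal A B T) T = \<alpha> \<longleftrightarrow>
    \<bar>A - C\<bar> = cos \<alpha> * sqrt ((cmod B)^2 - 4*A*C)"
proof -
  let ?x = "\<bar>A - C\<bar> / sqrt ((cmod B)^2 - 4*A*C)"
  have p: "sqrt ((cmod B)^2 - 4*A*C) > 0" using gcircle_nondeg_sqrt_pos assms(1) by blast
  have "?x \<le> 1" using gcircle_unit_coeff_bound[OF assms(3,2)] p by simp
  moreover have "?x \<ge> 0" using p by simp
  ultimately have "arccos ?x = \<alpha> \<longleftrightarrow> ?x = cos \<alpha>"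
    using arccos_cos[OF assms(4,5)] cos_arccos[of ?x] by auto
  then show ?thesis using curve_angle_gcircle_unit[OF assms(3,2,1)] p by (simp add: field_simps)
qed

lemma angle_arcs_eq_cos_angle_arcs:
  assumes "cmod T1 = 1" "cmod T2 = 1" "0 \<le> \<alpha>" "\<alpha> \<le> pi"
  shows "angle_arcs T1 T2 \<alpha> = cos_angle_arcs T1 T2 (cos \<alpha>)"
  unfolding angle_arcs_def cos_angle_arcs_def
  using curve_angle_gcircle_unit_eq_iff assms by blast

lemma hline_eq_cos_angle_arcs:
  assumes "cmod a = 1" shows "hline a b = cos_angle_arcs a b 0"
proof -
  have "curve_angle (gcircle_normal A B a) a = pi / 2 \<longleftrightarrow>
      \<bar>A - C\<bar> = 0 * sqrt ((cmod B)^2 - 4*A*C)"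
    if "gcircle_nondeg A B C" "a \<in> gcircle A B C" for A B C
    using curve_angle_gcircle_unit_eq_iff[OF that assms, of "pi / 2"] by simp
  then show ?thesis unfolding hline_def cos_angle_arcs_def by blast
qed

lemma angle_arcs_commute: "angle_arcs a b \<alpha> = angle_arcs b a \<alpha>"
  unfolding angle_arcs_def by blast


definition disk_aut :: "complex \<Rightarrow> complex \<Rightarrow> complex \<Rightarrow> complex" where
  "disk_aut l c z = l * (z - c) / (1 - cnj c * z)"

lemma disk_aut_denom_nonzero:
  assumes "cmod c < 1" "cmod z \<le> 1" shows "1 - cnj c * z \<noteq> 0"
proof
  assume "1 - cnj c * z = 0"
  then have "cmod c * cmod z = 1" by (metis complex_mod_cnj eq_iff_diff_eq_0 norm_mult norm_one)
  moreover have "cmod c * cmod z < 1"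
    using assms mult_left_le[of "cmod z" "cmod c"] by simp
  ultimately show False by simp
qed

lemma one_minus_norm_disk_aut_sq:
  assumes "cmod l = 1" "1 - cnj c * z \<noteq> 0"
  shows "1 - (cmod (disk_aut l c z))^2
    = (1 - (cmod c)^2) * (1 - (cmod z)^2) / (cmod (1 - cnj c * z))^2"
proof -
  have "(cmod (1 - cnj c * z))^2 - (cmod (z - c))^2 = (1 - (cmod c)^2) * (1 - (cmod z)^2)"
    unfolding cmod_power2 by simp algebra
  moreover have "(cmod (disk_aut l c z))^2 = (cmod (z - c))^2 / (cmod (1 - cnj c * z))^2"
    unfolding disk_aut_def using assms(1) by (simp add: norm_divide norm_mult power_divide)
  ultimately show ?thesis using assms(2) by (simp add: field_simps)
qed

lemma disk_aut_in_disk: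
  assumes "cmod l = 1" "cmod c < 1" "cmod z < 1" shows "cmod (disk_aut l c z) < 1"
proof -
  have d: "1 - cnj c * z \<noteq> 0" using disk_aut_denom_nonzero assms by simp
  have "(1 - (cmod c)^2) * (1 - (cmod z)^2) > 0" using assms by (simp add: abs_square_less_1)
  then have "1 - (cmod (disk_aut l c z))^2 > 0"
    using one_minus_norm_disk_aut_sq[OF assms(1) d] d by simp
  then show ?thesis by (simp add: abs_square_less_1)
qed

lemma disk_aut_on_circle:
  assumes "cmod l = 1" "cmod c < 1" "cmod z = 1" shows "cmod (disk_aut l c z) = 1"
proof -
  have d: "1 - cnj c * z \<noteq> 0" using disk_aut_denom_nonzero assms by simp
  have "1 - (cmod (disk_aut l c z))^2 = 0"
    using one_minus_norm_disk_aut_sq[OF assms(1) d] assms(3) by simp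
  then show ?thesis using norm_ge_zero[of "disk_aut l c z"] by (auto simp: power2_eq_1_iff)
qed

lemma disk_aut_inverse_params:
  assumes "cmod l = 1" "cmod c < 1" shows "cmod (cnj l) = 1" "cmod (- (l * c)) < 1"
  using assms by (simp_all add: norm_mult)

lemma disk_aut_inverse:
  assumes l: "cmod l = 1" and c: "cmod c < 1" and z: "cmod z \<le> 1"
  shows "disk_aut (cnj l) (- (l * c)) (disk_aut l c z) = z"
proof -
  have ll: "cnj l * l = 1" using l complex_norm_square[of l] by (simp add: mult.commute)
  have d: "1 - cnj c * z \<noteq> 0" using disk_aut_denom_nonzero[OF c z] .
  have cc: "1 - cnj c * c \<noteq> 0" using disk_aut_denom_nonzero[of c c] c by simp
  have num: "disk_aut l c z + l * c = l * z * (1 - cnj c * c) / (1 - cnj c * z)"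
    unfolding disk_aut_def using d by (simp add: field_simps)
  have den: "1 + cnj l * cnj c * disk_aut l c z = (1 - cnj c * c) / (1 - cnj c * z)"
    unfolding disk_aut_def using d ll by (simp add: field_simps)
  have "disk_aut (cnj l) (- (l * c)) (disk_aut l c z)
      = cnj l * (disk_aut l c z + l * c) / (1 + cnj l * cnj c * disk_aut l c z)"
    unfolding disk_aut_def[of "cnj l"] by (simp add: algebra_simps)
  also have "\<dots> = (cnj l * l) * z * ((1 - cnj c * c) / (1 - cnj c * z))
      / ((1 - cnj c * c) / (1 - cnj c * z))"
    unfolding num den by (simp add: mult.assoc)
  also have "\<dots> = z" using ll d cc by simp
  finally show ?thesis .
qed

lemma disk_aut_inverse_right:
  assumes l: "cmod l = 1" and c: "cmod c < 1" and y: "cmod y \<le> 1"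
  shows "disk_aut l c (disk_aut (cnj l) (- (l * c)) y) = y"
proof -
  have "cnj l * l = 1" using l complex_norm_square[of l] by (simp add: mult.commute)
  then have e: "- (cnj l * - (l * c)) = c" by (simp add: mult.assoc[symmetric])
  show ?thesis
    using disk_aut_inverse[OF disk_aut_inverse_params[OF l c] y] unfolding e complex_cnj_cnj .
qed

lemma disk_aut_eq_iff:
  assumes "cmod l = 1" "cmod c < 1" "cmod a \<le> 1" "cmod b \<le> 1"
  shows "disk_aut l c a = disk_aut l c b \<longleftrightarrow> a = b"
  by (metis assms disk_aut_inverse)

lemma continuous_on_disk_aut:
  assumes "cmod c < 1" shows "continuous_on (cball 0 1) (disk_aut l c)"
  unfolding disk_aut_def[abs_def]
  by (intro continuous_intros) (use disk_aut_denom_nonzero[OF assms] in auto)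

lemma disk_aut_diff:
  assumes "cmod c < 1" "cmod z \<le> 1" "cmod w \<le> 1"
  shows "disk_aut l c z - disk_aut l c w
    = l * (1 - cnj c * c) * (z - w) / ((1 - cnj c * z) * (1 - cnj c * w))"
  using disk_aut_denom_nonzero[OF assms(1,2)] disk_aut_denom_nonzero[OF assms(1,3)]
  unfolding disk_aut_def by (simp add: field_simps)

lemma hdist_disk_aut:
  assumes l: "cmod l = 1" and c: "cmod c < 1" and z: "cmod z < 1" and w: "cmod w < 1"
  shows "hdist (disk_aut l c z) (disk_aut l c w) = hdist z w"
proof -
  let ?dz = "cmod (1 - cnj c * z)" and ?dw = "cmod (1 - cnj c * w)" and ?k = "1 - (cmod c)^2"
  have dz: "?dz > 0" and dw: "?dw > 0"
    using disk_aut_denom_nonzero[OF c] z w by simp_all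
  have k: "?k > 0" using c by (simp add: abs_square_less_1)
  have "1 - cnj c * c = of_real ?k" by (simp add: complex_norm_square[symmetric] mult.commute)
  then have "cmod (1 - cnj c * c) = ?k" using k by (metis abs_of_pos norm_of_real)
  then have diff: "(cmod (disk_aut l c z - disk_aut l c w))^2 = ?k^2 * (cmod (z - w))^2 / (?dz^2 * ?dw^2)"
    unfolding disk_aut_diff[OF c less_imp_le[OF z] less_imp_le[OF w]]
    using l by (simp add: norm_mult norm_divide power_mult_distrib power_divide)
  have nz: "1 - (cmod (disk_aut l c z))^2 = ?k * (1 - (cmod z)^2) / ?dz^2"
    and nw: "1 - (cmod (disk_aut l c w))^2 = ?k * (1 - (cmod w)^2) / ?dw^2"
    using one_minus_norm_disk_aut_sq[OF l] disk_aut_denom_nonzero[OF c] z w by simp_all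
  have "(cmod (disk_aut l c z - disk_aut l c w))^2
      / ((1 - (cmod (disk_aut l c z))^2) * (1 - (cmod (disk_aut l c w))^2))
      = (cmod (z - w))^2 / ((1 - (cmod z)^2) * (1 - (cmod w)^2))"
    unfolding diff nz nw using dz dw k by (simp add: divide_simps power2_eq_square)
  then show ?thesis unfolding hdist_def by (metis times_divide_eq_right)
qed

lemma disk_aut_normalize:
  assumes P: "cmod P < 1" and Q: "cmod Q < 1" and PQ: "P \<noteq> Q"
  obtains l s where "cmod l = 1" "0 < s" "s < 1" "disk_aut l P P = 0" "disk_aut l P Q = of_real s"
proof -
  define q where "q = disk_aut 1 P Q"
  have "q \<noteq> 0"
    unfolding q_def disk_aut_def using disk_aut_denom_nonzero[OF P] Q PQ by simp
  moreover have "cmod q < 1" unfolding q_def using disk_aut_in_disk[of 1 P Q] P Q by simp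
  moreover have "disk_aut (cnj q / of_real (cmod q)) P Q = cnj q * q / of_real (cmod q)"
    unfolding q_def disk_aut_def by simp
  moreover have "cnj q * q = of_real (cmod q) * of_real (cmod q)"
    by (metis complex_norm_square mult.commute of_real_mult power2_eq_square)
  ultimately show ?thesis
    using that[of "cnj q / of_real (cmod q)" "cmod q"] by (simp add: norm_divide disk_aut_def)
qed

definition aut_coeff_A :: "complex \<Rightarrow> real \<Rightarrow> complex \<Rightarrow> real \<Rightarrow> real" where
  "aut_coeff_A c A B C = A + Re (cnj B * c) + C * (cmod c)^2"

definition aut_coeff_B :: "complex \<Rightarrow> complex \<Rightarrow> real \<Rightarrow> complex \<Rightarrow> real \<Rightarrow> complex" where
  "aut_coeff_B l c A B C = l * (B + 2 * of_real (A + C) * c + c^2 * cnj B)"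

definition aut_coeff_C :: "complex \<Rightarrow> real \<Rightarrow> complex \<Rightarrow> real \<Rightarrow> real" where
  "aut_coeff_C c A B C = A * (cmod c)^2 + Re (cnj B * c) + C"

lemma aut_coeff_A_minus_C:
  "aut_coeff_A c A B C - aut_coeff_C c A B C = (A - C) * (1 - (cmod c)^2)"
  unfolding aut_coeff_A_def aut_coeff_C_def by (simp add: algebra_simps)

lemma aut_coeff_discriminant:
  assumes "cmod l = 1"
  shows "(cmod (aut_coeff_B l c A B C))^2 - 4 * aut_coeff_A c A B C * aut_coeff_C c A B C
    = (1 - (cmod c)^2)^2 * ((cmod B)^2 - 4*A*C)"
proof -
  have "cmod (aut_coeff_B l c A B C) = cmod (B + 2 * of_real (A + C) * c + c^2 * cnj B)"
    unfolding aut_coeff_B_def using assms by (simp add: norm_mult)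
  moreover have "(cmod (B + 2 * of_real (A + C) * c + c^2 * cnj B))^2
      - 4 * aut_coeff_A c A B C * aut_coeff_C c A B C = (1 - (cmod c)^2)^2 * ((cmod B)^2 - 4*A*C)"
    unfolding aut_coeff_A_def aut_coeff_C_def cmod_power2 by (simp add: power2_eq_square) algebra
  ultimately show ?thesis by simp
qed

lemma Re_divide_conv_cnj: "Re (x / d) = Re (x * cnj d) / (cmod d)^2"
  using cmod_power2[of d] by (simp add: Re_divide power2_eq_square)

lemma disk_aut_gcircle:
  assumes l: "cmod l = 1" and d: "1 - cnj c * z \<noteq> 0" and z: "z \<in> gcircle A B C"
  shows "disk_aut l c z \<in> gcircle (aut_coeff_A c A B C) (aut_coeff_B l c A B C) (aut_coeff_C c A B C)"
proof -
  let ?d = "1 - cnj c * z" and ?B = "B + 2 * of_real (A + C) * c + c^2 * cnj B"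
  have ll: "cnj l * l = 1" using l complex_norm_square[of l] by (simp add: mult.commute)
  have dp: "(cmod ?d)^2 > 0" using d by simp
  have norm: "(cmod (disk_aut l c z))^2 = (cmod (z - c))^2 / (cmod ?d)^2"
    unfolding disk_aut_def using l by (simp add: norm_divide norm_mult power_divide)
  have "cnj (aut_coeff_B l c A B C) * disk_aut l c z = (cnj l * l) * (cnj ?B * (z - c)) / ?d"
    unfolding aut_coeff_B_def disk_aut_def complex_cnj_mult
    by (simp only: times_divide_eq_right times_divide_eq_left mult_ac)
  also have "\<dots> = (cnj ?B * (z - c)) / ?d" using ll by simp
  finally have re: "Re (cnj (aut_coeff_B l c A B C) * disk_aut l c z)
      = Re (cnj ?B * (z - c) * cnj ?d) / (cmod ?d)^2"
    by (simp only: Re_divide_conv_cnj)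
  have "aut_coeff_A c A B C * (cmod (disk_aut l c z))^2
      + Re (cnj (aut_coeff_B l c A B C) * disk_aut l c z) + aut_coeff_C c A B C
    = (aut_coeff_A c A B C * (cmod (z - c))^2 + Re (cnj ?B * (z - c) * cnj ?d)
       + aut_coeff_C c A B C * (cmod ?d)^2) / (cmod ?d)^2"
    unfolding norm re using dp by (simp add: field_simps)
  also have "\<dots> = (A * (cmod z)^2 + Re (cnj B * z) + C) * (1 - (cmod c)^2)^2 / (cmod ?d)^2"
    unfolding aut_coeff_A_def aut_coeff_C_def cmod_power2 by (simp add: power2_eq_square) algebra
  also have "\<dots> = 0" using z unfolding gcircle_def by simp
  finally show ?thesis unfolding gcircle_def by simp
qed

lemma disk_aut_cos_angle_arcs:
  assumes l: "cmod l = 1" and c: "cmod c < 1" and a: "cmod a = 1" and b: "cmod b = 1"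
    and z: "z \<in> cos_angle_arcs a b r"
  shows "disk_aut l c z \<in> cos_angle_arcs (disk_aut l c a) (disk_aut l c b) r"
proof -
  obtain A B C where nd: "gcircle_nondeg A B C"
    and on: "a \<in> gcircle A B C" "b \<in> gcircle A B C" "z \<in> gcircle A B C"
    and r: "\<bar>A - C\<bar> = r * sqrt ((cmod B)^2 - 4*A*C)" and zd: "cmod z < 1"
    using z unfolding cos_angle_arcs_def PDisk_def by blast
  have k: "1 - (cmod c)^2 > 0" using c by (simp add: abs_square_less_1)
  have "gcircle_nondeg (aut_coeff_A c A B C) (aut_coeff_B l c A B C) (aut_coeff_C c A B C)"
    using nd k unfolding gcircle_nondeg_def
    by (metis aut_coeff_discriminant[OF l] diff_gt_0_iff_gt mult_pos_pos zero_less_power)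
  moreover have "\<bar>aut_coeff_A c A B C - aut_coeff_C c A B C\<bar>
    = r * sqrt ((cmod (aut_coeff_B l c A B C))^2 - 4 * aut_coeff_A c A B C * aut_coeff_C c A B C)"
    unfolding aut_coeff_A_minus_C aut_coeff_discriminant[OF l] using k r
    by (simp add: abs_mult real_sqrt_mult)
  moreover have "disk_aut l c z \<in> PDisk" using disk_aut_in_disk[OF l c zd] unfolding PDisk_def by simp
  moreover have "disk_aut l c x \<in> gcircle (aut_coeff_A c A B C) (aut_coeff_B l c A B C) (aut_coeff_C c A B C)"
    if "x \<in> {a, b, z}" for x
    using that disk_aut_gcircle[OF l disk_aut_denom_nonzero[OF c]] on a b zd by auto
  ultimately show ?thesis unfolding cos_angle_arcs_def by blast
qed

lemma disk_aut_hline: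
  assumes l: "cmod l = 1" and c: "cmod c < 1" and a: "cmod a = 1" and b: "cmod b = 1"
    and z: "z \<in> hline a b"
  shows "disk_aut l c z \<in> hline (disk_aut l c a) (disk_aut l c b)"
  using disk_aut_cos_angle_arcs[OF l c a b] z
  unfolding hline_eq_cos_angle_arcs[OF a] hline_eq_cos_angle_arcs[OF disk_aut_on_circle[OF l c a]]
  by blast

lemma disk_aut_angle_arcs_iff:
  assumes l: "cmod l = 1" and c: "cmod c < 1" and a: "cmod a = 1" and b: "cmod b = 1"
    and \<alpha>: "0 \<le> \<alpha>" "\<alpha> \<le> pi" and z: "cmod z < 1"
  shows "disk_aut l c z \<in> angle_arcs (disk_aut l c a) (disk_aut l c b) \<alpha> \<longleftrightarrow> z \<in> angle_arcs a b \<alpha>"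
proof -
  let ?f = "disk_aut l c" and ?g = "disk_aut (cnj l) (- (l * c))"
  note inv = disk_aut_inverse_params[OF l c]
  have fa: "cmod (?f a) = 1" and fb: "cmod (?f b) = 1" using disk_aut_on_circle[OF l c] a b by auto
  have "?g (?f x) = x" if "cmod x \<le> 1" for x using disk_aut_inverse[OF l c that] .
  then have "?g (?f a) = a" "?g (?f b) = b" "?g (?f z) = z" using a b z by simp_all
  then have "?f z \<in> cos_angle_arcs (?f a) (?f b) (cos \<alpha>) \<Longrightarrow> z \<in> cos_angle_arcs a b (cos \<alpha>)"
    using disk_aut_cos_angle_arcs[OF inv fa fb] by metis
  then show ?thesis
    using disk_aut_cos_angle_arcs[OF l c a b]
    unfolding angle_arcs_eq_cos_angle_arcs[OF a b \<alpha>] angle_arcs_eq_cos_angle_arcs[OF fa fb \<alpha>] by blast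
qed

lemma disk_aut_preimage:
  assumes l: "cmod l = 1" and c: "cmod c < 1"
  shows "{z \<in> PDisk. S (disk_aut l c z)} = disk_aut (cnj l) (- (l * c)) ` {w \<in> PDisk. S w}"
proof (intro set_eqI iffI)
  fix z assume z: "z \<in> {z \<in> PDisk. S (disk_aut l c z)}"
  then have "disk_aut l c z \<in> {w \<in> PDisk. S w}" using disk_aut_in_disk[OF l c] unfolding PDisk_def by simp
  moreover have "z = disk_aut (cnj l) (- (l * c)) (disk_aut l c z)"
    using disk_aut_inverse[OF l c] z unfolding PDisk_def by simp
  ultimately show "z \<in> disk_aut (cnj l) (- (l * c)) ` {w \<in> PDisk. S w}" by blast
next
  fix z assume "z \<in> disk_aut (cnj l) (- (l * c)) ` {w \<in> PDisk. S w}"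
  then obtain w where "w \<in> {w \<in> PDisk. S w}" "z = disk_aut (cnj l) (- (l * c)) w" by blast
  then show "z \<in> {z \<in> PDisk. S (disk_aut l c z)}"
    using disk_aut_inverse_right[OF l c] disk_aut_in_disk[OF disk_aut_inverse_params[OF l c]]
    unfolding PDisk_def by simp
qed

lemma circ_ideal_triangles_on_circle:
  "X \<in> circ_ideal_triangles P Q R \<Longrightarrow> x \<in> X \<Longrightarrow> cmod x = 1"
  unfolding circ_ideal_triangles_def by auto

lemma disk_aut_circ_ideal_triangles:
  assumes l: "cmod l = 1" and c: "cmod c < 1" and X: "X \<in> circ_ideal_triangles P Q R"
  shows "disk_aut l c ` X \<in> circ_ideal_triangles (disk_aut l c P) (disk_aut l c Q) (disk_aut l c R)"
proof -
  obtain u v w where X: "X = {u, v, w}"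
    and unit: "cmod u = 1" "cmod v = 1" "cmod w = 1" and ne: "u \<noteq> v" "v \<noteq> w" "u \<noteq> w"
    and on: "P \<in> hline u v" "Q \<in> hline v w" "R \<in> hline w u"
    using assms unfolding circ_ideal_triangles_def by blast
  let ?f = "disk_aut l c"
  have "?f u \<noteq> ?f v" "?f v \<noteq> ?f w" "?f u \<noteq> ?f w"
    using disk_aut_eq_iff[OF l c] unit ne by simp_all
  moreover have "cmod (?f u) = 1" "cmod (?f v) = 1" "cmod (?f w) = 1"
    using disk_aut_on_circle[OF l c] unit by simp_all
  moreover have "?f P \<in> hline (?f u) (?f v)" "?f Q \<in> hline (?f v) (?f w)" "?f R \<in> hline (?f w) (?f u)"
    using disk_aut_hline[OF l c] unit on by simp_all
  ultimately show ?thesis unfolding circ_ideal_triangles_def X by blast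
qed

lemma bij_betw_disk_aut_circ_ideal_triangles:
  assumes l: "cmod l = 1" and c: "cmod c < 1"
    and P: "cmod P < 1" and Q: "cmod Q < 1" and R: "cmod R < 1"
  shows "bij_betw (\<lambda>X. disk_aut l c ` X) (circ_ideal_triangles P Q R)
           (circ_ideal_triangles (disk_aut l c P) (disk_aut l c Q) (disk_aut l c R))"
proof -
  let ?f = "disk_aut l c" and ?g = "disk_aut (cnj l) (- (l * c))"
  have gf: "?g (?f x) = x" if "cmod x \<le> 1" for x using disk_aut_inverse[OF l c that] .
  have fg: "?f (?g y) = y" if "cmod y \<le> 1" for y using disk_aut_inverse_right[OF l c that] .
  have g_maps: "(\<lambda>Y. ?g ` Y) \<in> circ_ideal_triangles (?f P) (?f Q) (?f R) \<rightarrow> circ_ideal_triangles P Q R"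
    using disk_aut_circ_ideal_triangles[OF disk_aut_inverse_params[OF l c],
        of _ "?f P" "?f Q" "?f R"] gf P Q R by fastforce
  show ?thesis
  proof (rule bij_betwI[OF _ g_maps])
    show "(\<lambda>X. ?f ` X) \<in> circ_ideal_triangles P Q R \<rightarrow> circ_ideal_triangles (?f P) (?f Q) (?f R)"
      using disk_aut_circ_ideal_triangles[OF l c] by blast
    show "?g ` ?f ` X = X" if "X \<in> circ_ideal_triangles P Q R" for X
      using gf circ_ideal_triangles_on_circle[OF that] by (force simp: image_image)
    show "?f ` ?g ` Y = Y" if "Y \<in> circ_ideal_triangles (?f P) (?f Q) (?f R)" for Y
      using fg circ_ideal_triangles_on_circle[OF that] by (force simp: image_image)
  qed
qed

definition hline_det :: "complex \<Rightarrow> complex \<Rightarrow> complex \<Rightarrow> real" where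
  "hline_det u v z = (1 + (cmod z)^2) * (Re u * Im v - Im u * Re v)
     + 2 * (Re v * Im z - Re u * Im z + Im u * Re z - Im v * Re z)"

lemma hline_imp_det_zero:
  assumes u: "cmod u = 1" and v: "cmod v = 1" and z: "z \<in> hline u v"
  shows "hline_det u v z = 0"
proof -
  obtain A B C where nd: "gcircle_nondeg A B C"
    and on: "u \<in> gcircle A B C" "v \<in> gcircle A B C" "z \<in> gcircle A B C"
    and "\<bar>A - C\<bar> = 0 * sqrt ((cmod B)^2 - 4*A*C)"
    using z unfolding hline_eq_cos_angle_arcs[OF u] cos_angle_arcs_def by blast
  then have CA: "C = A" by simp
  have eu: "2*A + (Re B * Re u + Im B * Im u) = 0"
    using on(1) Re_Im_sq_eq_1[OF u] CA unfolding gcircle_def cmod_power2 by simp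
  have ev: "2*A + (Re B * Re v + Im B * Im v) = 0"
    using on(2) Re_Im_sq_eq_1[OF v] CA unfolding gcircle_def cmod_power2 by simp
  have ez: "A * ((Re z)^2 + (Im z)^2) + (Re B * Re z + Im B * Im z) + A = 0"
    using on(3) CA unfolding gcircle_def by (simp add: cmod_power2)
  have "B \<noteq> 0"
  proof
    assume "B = 0"
    then have "4*A*A < 0" using nd CA unfolding gcircle_nondeg_def by simp
    moreover have "0 \<le> A*A" by simp
    ultimately show False by linarith
  qed
  moreover have "hline_det u v z * Re B = 0" "hline_det u v z * Im B = 0"
    using eu ev ez unfolding hline_det_def cmod_power2 by algebra+
  ultimately show ?thesis using complex_eqI[of B 0] by auto
qed

lemma det_zero_imp_hline:
  assumes u: "cmod u = 1" and v: "cmod v = 1" and uv: "u \<noteq> v"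
    and z: "z \<in> PDisk" and det: "hline_det u v z = 0"
  shows "z \<in> hline u v"
proof -
  have U: "(Re u)^2 + (Im u)^2 = 1" and V: "(Re v)^2 + (Im v)^2 = 1"
    using Re_Im_sq_eq_1 u v by blast+
  have "(Re u - Re v)^2 + (Im u - Im v)^2 \<noteq> 0"
    using uv complex_eqI[of u v] by (auto simp: sum_power2_eq_zero_iff)
  then have x1: "Re u * Re v + Im u * Im v \<noteq> 1"
    using U V by (auto simp: power2_diff algebra_simps)
  define A where "A = Re u * Im v - Im u * Re v"
  define B where "B = Complex (2 * (Im u - Im v)) (-2 * (Re u - Re v))"
  have "(cmod B)^2 - 4 * A * A = 4 * (1 - (Re u * Re v + Im u * Im v))^2"
    unfolding A_def B_def cmod_power2 using U V by simp algebra
  moreover have "(1 - (Re u * Re v + Im u * Im v))^2 > 0" using x1 by simp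
  ultimately have "gcircle_nondeg A B A" unfolding gcircle_nondeg_def by linarith
  moreover have "u \<in> gcircle A B A" "v \<in> gcircle A B A"
    using u v unfolding gcircle_def A_def B_def by (simp_all add: algebra_simps)
  moreover have "z \<in> gcircle A B A"
    using det unfolding gcircle_def A_def B_def hline_det_def cmod_power2 by simp algebra
  ultimately have "z \<in> cos_angle_arcs u v 0" unfolding cos_angle_arcs_def using z by auto
  then show ?thesis unfolding hline_eq_cos_angle_arcs[OF u] .
qed

lemma hline_det_conv_complex:
  assumes u: "cmod u = 1" and v: "cmod v = 1"
  shows "((u + v) * (1 + of_real ((cmod z)^2)) - 2 * (z + u * v * cnj z)) * cnj (u - v)
    = 2 * \<i> * of_real (hline_det u v z)"
  using Re_Im_sq_eq_1[OF u] Re_Im_sq_eq_1[OF v]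
  unfolding hline_det_def cmod_power2
  by (intro complex_eqI) (simp_all add: power2_eq_square, algebra+)

lemma hline_eq:
  assumes u: "cmod u = 1" and v: "cmod v = 1" and uv: "u \<noteq> v"
  shows "hline u v = {z \<in> PDisk. (u + v) * (1 + of_real ((cmod z)^2)) = 2 * (z + u * v * cnj z)}"
proof -
  have "hline_det u v z = 0 \<longleftrightarrow> (u + v) * (1 + of_real ((cmod z)^2)) = 2 * (z + u * v * cnj z)" for z
    using hline_det_conv_complex[OF u v, of z] uv by auto
  then show ?thesis
    using hline_imp_det_zero[OF u v] det_zero_imp_hline[OF u v uv] hline_def by blast
qed

lemma hline_through_0_and_real:
  assumes s: "0 < s" and a: "cmod a = 1" and b: "cmod b = 1" and ab: "a \<noteq> b"
    and "0 \<in> hline a b" and "of_real s \<in> hline a b"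
  shows "{a, b} = {1, -1}"
proof -
  have b': "b = - a" using assms(5) unfolding hline_eq[OF a b ab]
    by (simp add: eq_neg_iff_add_eq_0 add.commute)
  have "(a + b) * (1 + of_real (s^2)) = 2 * (of_real s + a * b * of_real s)"
    using assms(6) s unfolding hline_eq[OF a b ab] by simp
  then have "of_real s * (1 - a * a) = 0" unfolding b' by (simp add: algebra_simps)
  then have "(a - 1) * (a + 1) = 0" using s by (simp add: algebra_simps)
  then have "a = 1 \<or> a = -1" by (simp add: eq_neg_iff_add_eq_0)
  then show ?thesis using b' by auto
qed

lemma unit_circle_Re_eq_1: "{e. cmod e = 1 \<and> Re e = 1} = {1}"
proof -
  have "Im e = 0" if "cmod e = 1" "Re e = 1" for e
    using Re_Im_sq_eq_1[OF that(1)] that(2) by simp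
  then show ?thesis by (auto simp: complex_eq_iff)
qed

lemma card_unit_circle_Re_eq:
  assumes "\<bar>k\<bar> < 1" shows "card {e. cmod e = 1 \<and> Re e = k} = 2"
proof -
  define t where "t = sqrt (1 - k^2)"
  have k2: "k^2 < 1" using assms by (simp add: abs_square_less_1)
  have t: "t > 0" "t^2 = 1 - k^2" unfolding t_def using k2 by simp_all
  have "cmod e = 1 \<and> Re e = k \<longleftrightarrow> e = Complex k t \<or> e = Complex k (- t)" for e
  proof -
    have "cmod e = 1 \<and> Re e = k \<longleftrightarrow> Re e = k \<and> (Im e)^2 = t^2"
      using t(2) by (auto simp: cmod_def)
    also have "\<dots> \<longleftrightarrow> e = Complex k t \<or> e = Complex k (- t)"
      by (auto simp: complex_eq_iff power2_eq_iff)
    finally show ?thesis .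
  qed
  then have "{e. cmod e = 1 \<and> Re e = k} = {Complex k t, Complex k (- t)}" by blast
  then show ?thesis using t by simp
qed

lemma unit_circle_Re_mult_eq:
  assumes "a \<noteq> 0"
  shows "{v. cmod v = 1 \<and> Re (a * v) = c}
    = (\<lambda>e. cnj a / of_real (cmod a) * e) ` {e. cmod e = 1 \<and> Re e = c / cmod a}"
proof -
  have aa: "a * cnj a = of_real (cmod a) * of_real (cmod a)"
    by (metis complex_norm_square of_real_mult power2_eq_square)
  have r: "cmod a > 0" using assms by simp
  let ?u = "cnj a / of_real (cmod a)"
  have au: "a * (?u * e) = of_real (cmod a) * e" for e using aa r by (simp add: field_simps)
  show ?thesis
  proof (intro set_eqI iffI)
    fix v assume v: "v \<in> {v. cmod v = 1 \<and> Re (a * v) = c}"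
    define e where "e = a * v / of_real (cmod a)"
    have "v = ?u * e" unfolding e_def using aa r by (simp add: field_simps)
    moreover have "cmod e = 1 \<and> Re e = c / cmod a"
      unfolding e_def using v r by (simp add: norm_mult norm_divide)
    ultimately show "v \<in> (\<lambda>e. ?u * e) ` {e. cmod e = 1 \<and> Re e = c / cmod a}" by blast
  next
    fix v assume "v \<in> (\<lambda>e. ?u * e) ` {e. cmod e = 1 \<and> Re e = c / cmod a}"
    then obtain e where e: "cmod e = 1" "Re e = c / cmod a" and v: "v = ?u * e" by blast
    have "cmod v = 1" unfolding v using e r by (simp add: norm_mult norm_divide)
    moreover have "Re (a * v) = c" unfolding v au using e r by simp
    ultimately show "v \<in> {v. cmod v = 1 \<and> Re (a * v) = c}" by blast
  qed
qed

lemma unit_circle_Re_mult_eq_empty: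
  assumes "cmod a < c" shows "{v. cmod v = 1 \<and> Re (a * v) = c} = {}"
proof -
  have "Re (a * v) < c" if "cmod v = 1" for v
    using complex_Re_le_cmod[of "a * v"] that assms by (simp add: norm_mult)
  then show ?thesis by force
qed

lemma card_unit_circle_Re_mult_eq:
  assumes "0 < c" "c \<le> cmod a"
  shows "card {v. cmod v = 1 \<and> Re (a * v) = c} = (if c = cmod a then 1 else 2)"
proof -
  have a: "a \<noteq> 0" using assms by auto
  have "inj (\<lambda>e. cnj a / of_real (cmod a) * e)" using a by (auto intro: injI)
  then have "card {v. cmod v = 1 \<and> Re (a * v) = c} = card {e. cmod e = 1 \<and> Re e = c / cmod a}"
    unfolding unit_circle_Re_mult_eq[OF a] by (simp add: card_image inj_on_subset)
  moreover have "\<bar>c / cmod a\<bar> < 1" if "c \<noteq> cmod a"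
    using assms that by (simp add: abs_of_pos divide_less_eq_1)
  ultimately show ?thesis using a unit_circle_Re_eq_1 card_unit_circle_Re_eq by simp
qed

(* The other ideal endpoint of the hyperbolic line through the ideal point v and the real
   point s. *)
definition third_vertex :: "real \<Rightarrow> complex \<Rightarrow> complex" where
  "third_vertex s v = (of_real (2 * s) - v * of_real (1 + s^2)) / (of_real (1 + s^2) - of_real (2 * s) * v)"

definition vertex_coeff :: "real \<Rightarrow> complex \<Rightarrow> complex" where
  "vertex_coeff s R = of_real (s * (1 + (cmod R)^2)) - of_real (1 + s^2) * cnj R"

definition vertex_const :: "real \<Rightarrow> complex \<Rightarrow> real" where
  "vertex_const s R = ((1 + s^2) * (1 + (cmod R)^2) - 4 * s * Re R) / 2"

definition arc_discr :: "real \<Rightarrow> complex \<Rightarrow> real" where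
  "arc_discr s z = (1 - s^2)^2 * (1 - (cmod z)^2)^2 - 16 * s^2 * (Im z)^2"

lemma arc_discr_eq: "4 * (vertex_const s R)^2 - 4 * (cmod (vertex_coeff s R))^2 = arc_discr s R"
proof -
  have "2 * vertex_const s R = (1 + s^2) * (1 + ((Re R)^2 + (Im R)^2)) - 4 * s * Re R"
    unfolding vertex_const_def cmod_power2 by simp
  moreover have "(cmod (vertex_coeff s R))^2
      = (s * (1 + ((Re R)^2 + (Im R)^2)) - (1 + s^2) * Re R)^2 + ((1 + s^2) * Im R)^2"
    unfolding vertex_coeff_def cmod_power2 by simp
  ultimately show ?thesis unfolding arc_discr_def cmod_power2 by algebra
qed

lemma two_mult_lt_one_plus_sq: fixes s :: real assumes "s \<noteq> 1" shows "2 * s < 1 + s^2"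
proof -
  have "(1 - s)^2 > 0" using assms by simp
  then show ?thesis by (simp add: power2_diff)
qed

lemma vertex_const_pos: assumes "0 < s" "s < 1" shows "vertex_const s R > 0"
proof -
  have "(\<bar>Re R\<bar> - 1)^2 \<ge> 0" and "(cmod R)^2 \<ge> (Re R)^2" by (simp_all add: cmod_power2)
  then have a: "2 * \<bar>Re R\<bar> \<le> 1 + (cmod R)^2" by (simp add: power2_diff power2_abs)
  have "4 * s * Re R \<le> (2 * s) * (2 * \<bar>Re R\<bar>)" using assms by (simp add: abs_ge_self)
  also have "\<dots> \<le> (2 * s) * (1 + (cmod R)^2)" using a assms by (intro mult_left_mono) auto
  also have "\<dots> < (1 + s^2) * (1 + (cmod R)^2)"
    using two_mult_lt_one_plus_sq[of s] assms by (intro mult_strict_right_mono) (auto simp: add_pos_nonneg)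
  finally show ?thesis unfolding vertex_const_def by simp
qed

lemma third_vertex_denom_nonzero:
  assumes "0 < s" "s < 1" "cmod v = 1" shows "of_real (1 + s^2) - of_real (2 * s) * v \<noteq> 0"
proof
  assume "of_real (1 + s^2) - of_real (2 * s) * v = 0"
  then have "\<bar>1 + s^2\<bar> = \<bar>2 * s\<bar> * cmod v" by (metis eq_iff_diff_eq_0 norm_of_real norm_mult)
  then have "1 + s^2 = 2 * s" using assms by simp
  then show False using two_mult_lt_one_plus_sq[of s] assms by simp
qed

lemma norm_third_vertex: assumes "0 < s" "s < 1" "cmod v = 1" shows "cmod (third_vertex s v) = 1"
proof -
  have V: "(Re v)^2 + (Im v)^2 = 1" using Re_Im_sq_eq_1[OF assms(3)] .
  have "(cmod (of_real (2 * s) - v * of_real (1 + s^2)))^2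
      = (cmod (of_real (1 + s^2) - of_real (2 * s) * v))^2"
    unfolding cmod_power2 using V by (simp add: power2_eq_square) algebra
  then have "cmod (of_real (2 * s) - v * of_real (1 + s^2)) = cmod (of_real (1 + s^2) - of_real (2 * s) * v)"
    by (simp add: power2_eq_iff_nonneg)
  then show ?thesis
    unfolding third_vertex_def using third_vertex_denom_nonzero[OF assms] by (simp add: norm_divide)
qed

lemma real_in_hline_iff:
  assumes s: "0 < s" "s < 1" and v: "cmod v = 1" and w: "cmod w = 1" and vw: "v \<noteq> w"
  shows "of_real s \<in> hline v w \<longleftrightarrow> w = third_vertex s v"
proof -
  let ?D = "of_real (1 + s^2) - of_real (2 * s) * v :: complex"
  let ?E = "(v + w) * (1 + of_real ((cmod (of_real s :: complex))^2)) = 2 * (of_real s + v * w * cnj (of_real s))"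
  have "of_real s \<in> hline v w \<longleftrightarrow> ?E"
    unfolding hline_eq[OF v w vw] PDisk_def using s by simp
  also have "?E \<longleftrightarrow> w * ?D = of_real (2 * s) - v * of_real (1 + s^2)"
  proof -
    have "(v + w) * (1 + of_real ((cmod (of_real s :: complex))^2)) - 2 * (of_real s + v * w * cnj (of_real s))
        = w * ?D - (of_real (2 * s) - v * of_real (1 + s^2))"
      by (simp add: algebra_simps power2_eq_square)
    then show ?thesis by (metis eq_iff_diff_eq_0)
  qed
  also have "\<dots> \<longleftrightarrow> w = third_vertex s v"
    unfolding third_vertex_def using third_vertex_denom_nonzero[OF s v] by (simp add: eq_divide_eq)
  finally show ?thesis .
qed

lemma third_side_identity:
  assumes "(Re v)^2 + (Im v)^2 = 1"
  shows "((of_real (2 * s) - v * of_real (1 + s^2)) - v * (of_real (1 + s^2) - of_real (2 * s) * v))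
        * (1 + of_real ((cmod R)^2))
     - 2 * (R * (of_real (1 + s^2) - of_real (2 * s) * v)
        - (of_real (2 * s) - v * of_real (1 + s^2)) * v * cnj R)
   = 2 * v * of_real (2 * Re (vertex_coeff s R * v) - 2 * vertex_const s R)"
  using assms unfolding vertex_coeff_def vertex_const_def cmod_power2
  by (intro complex_eqI) (simp_all add: power2_eq_square, algebra+)

lemma R_in_third_side_iff:
  assumes s: "0 < s" "s < 1" and v: "cmod v = 1" and R: "cmod R < 1"
    and ne: "third_vertex s v \<noteq> - v"
  shows "R \<in> hline (third_vertex s v) (- v) \<longleftrightarrow> Re (vertex_coeff s R * v) = vertex_const s R"
proof -
  let ?D = "of_real (1 + s^2) - of_real (2 * s) * v :: complex"
  let ?N = "of_real (2 * s) - v * of_real (1 + s^2) :: complex"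
  let ?w = "third_vertex s v"
  have D: "?D \<noteq> 0" using third_vertex_denom_nonzero[OF s v] .
  have wD: "?w * ?D = ?N" unfolding third_vertex_def using D by simp
  have "((?w + - v) * (1 + of_real ((cmod R)^2)) - 2 * (R + ?w * - v * cnj R)) * ?D
      = (?w * ?D - v * ?D) * (1 + of_real ((cmod R)^2)) - 2 * (R * ?D - (?w * ?D) * v * cnj R)"
    by (simp add: algebra_simps)
  also have "\<dots> = 2 * v * of_real (2 * Re (vertex_coeff s R * v) - 2 * vertex_const s R)"
    unfolding wD by (rule third_side_identity[OF Re_Im_sq_eq_1[OF v]])
  finally have "(?w + - v) * (1 + of_real ((cmod R)^2)) = 2 * (R + ?w * - v * cnj R)
      \<longleftrightarrow> 2 * v * of_real (2 * Re (vertex_coeff s R * v) - 2 * vertex_const s R) = 0"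
    using D by (metis eq_iff_diff_eq_0 mult_eq_0_iff)
  also have "\<dots> \<longleftrightarrow> Re (vertex_coeff s R * v) = vertex_const s R"
    using v by (auto simp del: of_real_diff)
  moreover have mv: "cmod (- v) = 1" using v by simp
  moreover have "R \<in> hline ?w (- v) \<longleftrightarrow> (?w + - v) * (1 + of_real ((cmod R)^2)) = 2 * (R + ?w * - v * cnj R)"
    unfolding hline_eq[OF norm_third_vertex[OF s v] mv ne] PDisk_def using R by simp
  ultimately show ?thesis by blast
qed

definition first_vertices :: "real \<Rightarrow> complex \<Rightarrow> complex set" where
  "first_vertices s R = {v. cmod v = 1 \<and> Re (vertex_coeff s R * v) = vertex_const s R}"

definition ideal_tri :: "real \<Rightarrow> complex \<Rightarrow> complex set" where
  "ideal_tri s v = {- v, v, third_vertex s v}"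

lemma third_vertex_ne:
  assumes s: "0 < s" "s < 1" and v: "cmod v = 1" shows "third_vertex s v \<noteq> v"
proof
  let ?D = "of_real (1 + s^2) - of_real (2 * s) * v :: complex"
  let ?N = "of_real (2 * s) - v * of_real (1 + s^2) :: complex"
  assume "third_vertex s v = v"
  then have "?N = v * ?D"
    using third_vertex_denom_nonzero[OF s v] unfolding third_vertex_def by (simp add: divide_eq_eq)
  then have "(?N - v * ?D) * cnj v = 0" by simp
  moreover have "(?N - v * ?D) * cnj v = of_real (4 * s * Re v - 2 * (1 + s^2))"
    using Re_Im_sq_eq_1[OF v] by (intro complex_eqI) (simp_all add: power2_eq_square, algebra+)
  ultimately have "4 * s * Re v - 2 * (1 + s^2) = 0" by (metis of_real_eq_0_iff)
  then have "2 * (1 + s^2) = 4 * s * Re v" by simp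
  also have "\<dots> \<le> 4 * s" using complex_Re_le_cmod[of v] v s by simp
  finally show False using two_mult_lt_one_plus_sq[of s] s by simp
qed

lemma third_vertex_eq_neg_imp:
  assumes s: "0 < s" "s < 1" and v: "cmod v = 1" and "third_vertex s v = - v"
  shows "v = 1 \<or> v = -1"
proof -
  have "of_real (2 * s) - v * of_real (1 + s^2) = - v * (of_real (1 + s^2) - of_real (2 * s) * v)"
    using assms third_vertex_denom_nonzero[OF s v] unfolding third_vertex_def by (simp add: divide_eq_eq)
  then have "of_real (2 * s) * (1 - v * v) = 0" by (simp add: algebra_simps)
  then have "(v - 1) * (v + 1) = 0" using s by (simp add: algebra_simps)
  then show ?thesis by (simp add: eq_neg_iff_add_eq_0)
qed

lemma first_vertices_ne_pm1:
  assumes s: "0 < s" "s < 1" and R: "cmod R < 1" and v: "v \<in> first_vertices s R"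
  shows "v \<noteq> 1" "v \<noteq> -1"
proof -
  have x: "\<bar>Re R\<bar> < 1" using abs_Re_le_cmod[of R] R by linarith
  have "1 + (cmod R)^2 + 2 * Re R = (1 + Re R)^2 + (Im R)^2"
    and "1 + (cmod R)^2 - 2 * Re R = (1 - Re R)^2 + (Im R)^2"
    unfolding cmod_power2 by (simp_all add: power2_eq_square algebra_simps)
  moreover have "(1 + Re R)^2 > 0" "(1 - Re R)^2 > 0" using x by simp_all
  ultimately have p: "1 + (cmod R)^2 + 2 * Re R > 0" "1 + (cmod R)^2 - 2 * Re R > 0"
    by (simp_all add: add_pos_nonneg)
  have "1 + s^2 - 2 * s > 0" "1 + s^2 + 2 * s > 0"
    using two_mult_lt_one_plus_sq[of s] s by (simp_all add: add_pos_nonneg)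
  then have pos: "(1 + s^2 - 2 * s) * (1 + (cmod R)^2 + 2 * Re R) > 0"
    "(1 + s^2 + 2 * s) * (1 + (cmod R)^2 - 2 * Re R) > 0" using p by simp_all
  have "Re (vertex_coeff s R * 1) - vertex_const s R = - ((1 + s^2 - 2 * s) * (1 + (cmod R)^2 + 2 * Re R)) / 2"
    and "Re (vertex_coeff s R * -1) - vertex_const s R = - ((1 + s^2 + 2 * s) * (1 + (cmod R)^2 - 2 * Re R)) / 2"
    unfolding vertex_coeff_def vertex_const_def by (simp_all add: field_simps)
  then have "Re (vertex_coeff s R * 1) < vertex_const s R" "Re (vertex_coeff s R * -1) < vertex_const s R"
    using pos by linarith+
  then show "v \<noteq> 1" "v \<noteq> -1" using v unfolding first_vertices_def by auto
qed

lemma third_vertex_minus_ne: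
  assumes s: "0 < s" "s < 1" and v: "cmod v = 1" shows "third_vertex s (- v) \<noteq> third_vertex s v"
proof
  let ?D = "of_real (1 + s^2) - of_real (2 * s) * v :: complex"
  let ?N = "of_real (2 * s) - v * of_real (1 + s^2) :: complex"
  let ?D' = "of_real (1 + s^2) - of_real (2 * s) * (- v) :: complex"
  let ?N' = "of_real (2 * s) - (- v) * of_real (1 + s^2) :: complex"
  assume "third_vertex s (- v) = third_vertex s v"
  moreover have "cmod (- v) = 1" using v by simp
  then have "?D \<noteq> 0" "?D' \<noteq> 0" using third_vertex_denom_nonzero[OF s] v by blast+
  ultimately have "?N' * ?D = ?N * ?D'" unfolding third_vertex_def by (simp add: frac_eq_eq)
  moreover have "?N' * ?D - ?N * ?D' = 2 * v * of_real ((1 - s^2)^2)"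
    by (intro complex_eqI) (simp_all add: power2_eq_square, algebra+)
  ultimately have "2 * v * of_real ((1 - s^2)^2) = 0" by simp
  moreover have "(1 - s^2)^2 \<noteq> 0" using s by (auto simp: power2_eq_1_iff)
  ultimately show False using v by (metis mult_eq_0_iff norm_zero of_real_eq_0_iff zero_neq_numeral zero_neq_one)
qed

lemma circ_ideal_triangles_normal:
  assumes s: "0 < s" "s < 1" and R: "cmod R < 1"
  shows "circ_ideal_triangles 0 (of_real s) R = ideal_tri s ` first_vertices s R"
proof (intro set_eqI iffI)
  fix X assume "X \<in> circ_ideal_triangles 0 (of_real s) R"
  then obtain u v w where X: "X = {u, v, w}"
    and unit: "cmod u = 1" "cmod v = 1" "cmod w = 1" and ne: "u \<noteq> v" "v \<noteq> w" "u \<noteq> w"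
    and on: "0 \<in> hline u v" "of_real s \<in> hline v w" "R \<in> hline w u"
    unfolding circ_ideal_triangles_def by blast
  have u: "u = - v" using on(1) unfolding hline_eq[OF unit(1,2) ne(1)] by (simp add: eq_neg_iff_add_eq_0)
  have w: "w = third_vertex s v" using real_in_hline_iff[OF s unit(2,3) ne(2)] on(2) by blast
  have "v \<in> first_vertices s R"
    using R_in_third_side_iff[OF s unit(2) R] on(3) ne(3) unit(2) unfolding u w first_vertices_def by auto
  then show "X \<in> ideal_tri s ` first_vertices s R" unfolding X u w ideal_tri_def by blast
next
  fix X assume "X \<in> ideal_tri s ` first_vertices s R"
  then obtain v where v: "v \<in> first_vertices s R" and X: "X = ideal_tri s v" by blast
  have v1: "cmod v = 1" using v unfolding first_vertices_def by simp
  have w1: "cmod (third_vertex s v) = 1" using norm_third_vertex[OF s v1] .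
  have mv1: "cmod (- v) = 1" using v1 by simp
  have d1: "- v \<noteq> v" using v1 by (auto simp: minus_equation_iff)
  have d2: "v \<noteq> third_vertex s v" using third_vertex_ne[OF s v1] by simp
  have d3: "third_vertex s v \<noteq> - v"
    using third_vertex_eq_neg_imp[OF s v1] first_vertices_ne_pm1[OF s R v] by blast
  have "0 \<in> hline (- v) v" unfolding hline_eq[OF mv1 v1 d1] PDisk_def by simp
  moreover have "of_real s \<in> hline v (third_vertex s v)" using real_in_hline_iff[OF s v1 w1 d2] by simp
  moreover have "R \<in> hline (third_vertex s v) (- v)"
    using R_in_third_side_iff[OF s v1 R d3] v unfolding first_vertices_def by simp
  ultimately show "X \<in> circ_ideal_triangles 0 (of_real s) R"
    unfolding circ_ideal_triangles_def X ideal_tri_def using mv1 v1 w1 d1 d2 d3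
    by (intro CollectI exI[where x = "- v"] exI[where x = v] exI[where x = "third_vertex s v"]) simp
qed

lemma inj_on_ideal_tri:
  assumes s: "0 < s" "s < 1" and R: "cmod R < 1"
  shows "inj_on (ideal_tri s) (first_vertices s R)"
proof (rule inj_onI)
  fix v1 v2 assume v1: "v1 \<in> first_vertices s R" and v2: "v2 \<in> first_vertices s R"
    and eq: "ideal_tri s v1 = ideal_tri s v2"
  have antipodal: "{x \<in> ideal_tri s v. - x \<in> ideal_tri s v} = {v, - v}" if "v \<in> first_vertices s R" for v
  proof -
    have u: "cmod v = 1" using that unfolding first_vertices_def by simp
    have "third_vertex s v \<noteq> v" "third_vertex s v \<noteq> - v" "third_vertex s v \<noteq> 0"
      using third_vertex_ne[OF s u] third_vertex_eq_neg_imp[OF s u] first_vertices_ne_pm1[OF s R that]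
        norm_third_vertex[OF s u] by auto
    then show ?thesis unfolding ideal_tri_def by (auto simp: minus_equation_iff)
  qed
  have "{v1, - v1} = {v2, - v2}" using antipodal[OF v1] antipodal[OF v2] eq by simp
  then have "v2 = v1 \<or> v2 = - v1" by (auto simp: doubleton_eq_iff)
  moreover have "v2 \<noteq> - v1"
  proof
    assume v2m: "v2 = - v1"
    have u1: "cmod v1 = 1" and u2: "cmod v2 = 1" using v1 v2 unfolding first_vertices_def by simp_all
    have "third_vertex s v2 \<in> ideal_tri s v1" using eq unfolding ideal_tri_def by auto
    then show False
      using third_vertex_ne[OF s u2] third_vertex_eq_neg_imp[OF s u2] first_vertices_ne_pm1[OF s R v2]
        third_vertex_minus_ne[OF s u1] v2m unfolding ideal_tri_def by auto
  qed
  ultimately show "v1 = v2" by simp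
qed

lemma card_circ_ideal_triangles_normal:
  assumes s: "0 < s" "s < 1" and R: "cmod R < 1"
  defines "T \<equiv> circ_ideal_triangles 0 (of_real s) R"
  shows "(arc_discr s R > 0 \<longrightarrow> T = {})
    \<and> (arc_discr s R = 0 \<longrightarrow> finite T \<and> card T = 1)
    \<and> (arc_discr s R < 0 \<longrightarrow> finite T \<and> card T = 2)"
proof -
  let ?a = "vertex_coeff s R" and ?c = "vertex_const s R"
  have c: "?c > 0" using vertex_const_pos[OF s] .
  have T: "T = ideal_tri s ` first_vertices s R"
    unfolding T_def using circ_ideal_triangles_normal[OF s R] .
  have card: "card T = card (first_vertices s R)"
    unfolding T using card_image[OF inj_on_ideal_tri[OF s R]] .
  have fin: "finite T" if "card (first_vertices s R) \<noteq> 0" using that card card_ge_0_finite by force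
  have "arc_discr s R = 4 * (?c - cmod ?a) * (?c + cmod ?a)"
    using arc_discr_eq[of s R] by (simp add: power2_eq_square algebra_simps)
  moreover have "?c + cmod ?a > 0" using c by (simp add: add_pos_nonneg)
  ultimately have sign: "arc_discr s R > 0 \<longleftrightarrow> cmod ?a < ?c" "arc_discr s R = 0 \<longleftrightarrow> ?c = cmod ?a"
      "arc_discr s R < 0 \<longleftrightarrow> ?c < cmod ?a"
    by (auto simp: zero_less_mult_iff mult_less_0_iff)
  show ?thesis
  proof (intro conjI impI)
    assume "arc_discr s R > 0"
    then have "cmod ?a < ?c" using sign by simp
    then show "T = {}" unfolding T first_vertices_def using unit_circle_Re_mult_eq_empty by simp
  next
    assume "arc_discr s R = 0"
    then have "?c = cmod ?a" using sign by simp
    then show "finite T" "card T = 1"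
      using card_unit_circle_Re_mult_eq[OF c] card fin unfolding first_vertices_def by simp_all
  next
    assume "arc_discr s R < 0"
    then have "?c < cmod ?a" using sign by simp
    then show "finite T" "card T = 2"
      using card_unit_circle_Re_mult_eq[OF c] card fin unfolding first_vertices_def by simp_all
  qed
qed

lemma exp_hdist_0_real:
  fixes s :: real assumes s: "0 \<le> s" "s < 1"
  shows "exp (hdist 0 (of_real s)) = (1 + s) / (1 - s)"
proof -
  define x where "x = 1 + 2 * s^2 / (1 - s^2)"
  define d where "d = 1 - s^2"
  have d: "0 < d" "d \<le> 1" using s unfolding d_def by (simp_all add: abs_square_less_1)
  have ss: "s * s = 1 - d" unfolding d_def by (simp add: power2_eq_square)
  have x: "x = (2 - d) / d" unfolding x_def d_def[symmetric] using d ss by (simp add: field_simps power2_eq_square)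
  have x1: "x \<ge> 1" unfolding x using d by (simp add: field_simps)
  have "x^2 - 1 = (2 * s / d)^2"
    unfolding x using d by (simp add: field_simps power2_eq_square) (use ss in algebra)
  then have "sqrt (x^2 - 1) = 2 * s / d" using s d by simp
  then have "x + sqrt (x^2 - 1) = (2 - d + 2 * s) / d" unfolding x using d by (simp add: field_simps)
  also have "\<dots> = (1 + s) / (1 - s)"
    using s d unfolding d_def by (simp add: field_simps power2_eq_square)
  finally have "x + sqrt (x^2 - 1) = (1 + s) / (1 - s)" .
  moreover have "hdist 0 (of_real s) = arcosh x" unfolding hdist_def x_def by simp
  moreover have "(1 + s) / (1 - s) > 0" using s by simp
  ultimately show ?thesis using arcosh_real_def[OF x1] by simp
qed

lemma arc_angle_facts:
  fixes t :: real assumes t: "1 \<le> t"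
  shows "cos (2 * arctan t - pi / 2) = 2 * t / (1 + t^2)"
    and "0 \<le> 2 * arctan t - pi / 2" and "2 * arctan t - pi / 2 \<le> pi"
proof -
  have q: "sqrt (1 + t^2) * sqrt (1 + t^2) = 1 + t^2" by (simp add: add_pos_nonneg)
  have "cos (2 * arctan t - pi / 2) = sin (2 * arctan t)" by (simp add: cos_diff)
  also have "\<dots> = 2 * (t / sqrt (1 + t^2)) * (1 / sqrt (1 + t^2))"
    by (simp add: sin_double sin_arctan cos_arctan)
  also have "\<dots> = 2 * t / (1 + t^2)" using q by (simp add: field_simps)
  finally show "cos (2 * arctan t - pi / 2) = 2 * t / (1 + t^2)" .
  have "pi / 4 \<le> arctan t" using arctan_le_iff[of 1 t] t by (simp add: arctan_one)
  then show "0 \<le> 2 * arctan t - pi / 2" by linarith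
  show "2 * arctan t - pi / 2 \<le> pi" using arctan_ubound[of t] pi_gt_zero by linarith
qed

lemma arc_angle_normal:
  fixes s :: real assumes s: "0 < s" "s < 1"
  defines "\<alpha> \<equiv> 2 * arctan (exp (hdist 0 (of_real s))) - pi / 2"
  shows "cos \<alpha> = (1 - s^2) / (1 + s^2)" and "0 \<le> \<alpha>" and "\<alpha> \<le> pi"
proof -
  have t: "1 \<le> (1 + s) / (1 - s)" using s by simp
  have s1: "1 - s \<noteq> 0" using s by simp
  have "1 + ((1 + s) / (1 - s))^2 = ((1 - s)^2 + (1 + s)^2) / (1 - s)^2"
    unfolding power_divide using s1 by (simp add: add_divide_distrib)
  also have "\<dots> = 2 * (1 + s^2) / (1 - s)^2" by (simp add: power2_eq_square algebra_simps)
  finally have sq: "1 + ((1 + s) / (1 - s))^2 = 2 * (1 + s^2) / (1 - s)^2" .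
  have "2 * ((1 + s) / u) / (2 * (1 + s^2) / u^2) = (1 + s) * u / (1 + s^2)" if "u \<noteq> 0" for u
  proof -
    have "1 + s^2 \<noteq> 0" using add_pos_nonneg[of 1 "s^2"] by simp
    then show ?thesis using that by (simp add: divide_simps) (simp add: power2_eq_square algebra_simps)
  qed
  then have "2 * ((1 + s) / (1 - s)) / (1 + ((1 + s) / (1 - s))^2) = (1 + s) * (1 - s) / (1 + s^2)"
    unfolding sq using s1 by blast
  also have "\<dots> = (1 - s^2) / (1 + s^2)" by (simp add: power2_eq_square algebra_simps)
  finally have "2 * ((1 + s) / (1 - s)) / (1 + ((1 + s) / (1 - s))^2) = (1 - s^2) / (1 + s^2)" .
  then show "cos \<alpha> = (1 - s^2) / (1 + s^2)"
    unfolding \<alpha>_def exp_hdist_0_real[OF less_imp_le[OF s(1)] s(2)] arc_angle_facts(1)[OF t] .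
  show "0 \<le> \<alpha>" "\<alpha> \<le> pi"
    unfolding \<alpha>_def exp_hdist_0_real[OF less_imp_le[OF s(1)] s(2)] using arc_angle_facts(2,3)[OF t] .
qed

lemma cos_angle_arcs_pm1_imp_arc_discr:
  assumes s: "0 < s" "s < 1" and z: "z \<in> cos_angle_arcs 1 (-1) ((1 - s^2) / (1 + s^2))"
  shows "arc_discr s z = 0"
proof -
  have sp: "0 < 1 - s^2" "0 < 1 + s^2" using s by (simp_all add: abs_square_less_1 add_pos_nonneg)
  obtain A B C where nd: "gcircle_nondeg A B C"
    and on: "1 \<in> gcircle A B C" "-1 \<in> gcircle A B C" "z \<in> gcircle A B C"
    and r: "\<bar>A - C\<bar> = (1 - s^2) / (1 + s^2) * sqrt ((cmod B)^2 - 4*A*C)"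
    using z unfolding cos_angle_arcs_def by blast
  have "A + Re B + C = 0" "A - Re B + C = 0" using on(1,2) unfolding gcircle_def by simp_all
  then have ReB: "Re B = 0" and CA: "C = - A" by linarith+
  have D: "(cmod B)^2 - 4*A*C = (Im B)^2 + 4 * A^2"
    unfolding cmod_power2 using ReB CA by (simp add: power2_eq_square)
  have Dp: "(Im B)^2 + 4 * A^2 > 0" using nd unfolding gcircle_nondeg_def D[symmetric] by simp
  have "(1 + s^2) * \<bar>2 * A\<bar> = (1 - s^2) * sqrt ((Im B)^2 + 4 * A^2)"
    using r sp CA unfolding D by (simp add: field_simps)
  then have "((1 + s^2) * \<bar>2 * A\<bar>)^2 = ((1 - s^2) * sqrt ((Im B)^2 + 4 * A^2))^2" by simp
  then have er: "(1 + s^2)^2 * (4 * A^2) = (1 - s^2)^2 * ((Im B)^2 + 4 * A^2)"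
    using Dp by (simp add: power_mult_distrib)
  have ez: "A * (1 - (cmod z)^2) = Im B * Im z"
    using on(3) ReB CA unfolding gcircle_def by (simp add: algebra_simps)
  have "A \<noteq> 0"
  proof
    assume "A = 0"
    then have "Im B = 0" using er sp by simp
    then show False using Dp \<open>A = 0\<close> by simp
  qed
  moreover have "A^2 * arc_discr s z = 0" using er ez unfolding arc_discr_def by algebra
  ultimately show ?thesis by simp
qed

lemma arc_discr_imp_cos_angle_arcs_pm1:
  assumes s: "0 < s" "s < 1" and z: "z \<in> PDisk" and F: "arc_discr s z = 0"
  shows "z \<in> cos_angle_arcs 1 (-1) ((1 - s^2) / (1 + s^2))"
proof -
  have sp: "0 < 1 - s^2" "0 < 1 + s^2" using s by (simp_all add: abs_square_less_1 add_pos_nonneg)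
  have "0 < 1 - (cmod z)^2" using z unfolding PDisk_def by (simp add: abs_square_less_1)
  moreover have "((1 - s^2) * (1 - (cmod z)^2))^2 = (4 * s * \<bar>Im z\<bar>)^2"
    using F unfolding arc_discr_def by (simp add: power_mult_distrib power2_abs)
  ultimately have k: "(1 - s^2) * (1 - (cmod z)^2) = 4 * s * \<bar>Im z\<bar>"
    using sp s by (simp add: power2_eq_iff_nonneg)
  define b where "b = (if Im z \<ge> 0 then 4 * s else - 4 * s)"
  define A where "A = 1 - s^2"
  have D: "(cmod (Complex 0 b))^2 - 4 * A * (- A) = (2 * (1 + s^2))^2"
    unfolding A_def b_def cmod_power2 by (simp add: power2_eq_square algebra_simps)
  have "gcircle_nondeg A (Complex 0 b) (- A)"
    unfolding gcircle_nondeg_def using D sp by (smt (verit) zero_less_power)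
  moreover have "1 \<in> gcircle A (Complex 0 b) (- A)" "-1 \<in> gcircle A (Complex 0 b) (- A)"
    unfolding gcircle_def by simp_all
  moreover have "z \<in> gcircle A (Complex 0 b) (- A)"
    unfolding gcircle_def A_def b_def using k by (auto simp: algebra_simps)
  moreover have "\<bar>A - - A\<bar> = (1 - s^2) / (1 + s^2) * sqrt ((cmod (Complex 0 b))^2 - 4 * A * (- A))"
    unfolding D unfolding A_def using sp by (simp add: field_simps)
  ultimately show ?thesis unfolding cos_angle_arcs_def using z by blast
qed

lemma angle_arcs_normal:
  assumes s: "0 < s" "s < 1"
  shows "angle_arcs 1 (-1) (2 * arctan (exp (hdist 0 (of_real s))) - pi / 2)
    = {z \<in> PDisk. arc_discr s z = 0}"
proof -
  have "angle_arcs 1 (-1) (2 * arctan (exp (hdist 0 (of_real s))) - pi / 2)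
      = cos_angle_arcs 1 (-1) ((1 - s^2) / (1 + s^2))"
    using angle_arcs_eq_cos_angle_arcs[of 1 "-1", OF _ _ arc_angle_normal(2,3)[OF s]]
    unfolding arc_angle_normal(1)[OF s] by simp
  moreover have "cos_angle_arcs 1 (-1) r \<subseteq> PDisk" for r unfolding cos_angle_arcs_def by blast
  ultimately show ?thesis
    using cos_angle_arcs_pm1_imp_arc_discr[OF s] arc_discr_imp_cos_angle_arcs_pm1[OF s] by blast
qed

lemma arc_discr_sign:
  assumes s: "0 < s" "s < 1" and w: "cmod w < 1"
  shows "arc_discr s w > 0 \<longleftrightarrow> 4 * s * \<bar>Im w\<bar> < (1 - s^2) * (1 - (cmod w)^2)"
    and "arc_discr s w = 0 \<longleftrightarrow> 4 * s * \<bar>Im w\<bar> = (1 - s^2) * (1 - (cmod w)^2)"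
proof -
  let ?a = "(1 - s^2) * (1 - (cmod w)^2)" and ?b = "4 * s * \<bar>Im w\<bar>"
  have "?a > 0" using s w by (simp add: abs_square_less_1)
  then have ab: "?a + ?b > 0" using s by (simp add: add_pos_nonneg)
  have F: "arc_discr s w = (?a - ?b) * (?a + ?b)"
    unfolding arc_discr_def by (simp add: algebra_simps power2_eq_square)
  show "arc_discr s w > 0 \<longleftrightarrow> ?b < ?a" unfolding F using ab by (simp add: zero_less_mult_iff)
  show "arc_discr s w = 0 \<longleftrightarrow> ?b = ?a" unfolding F using ab by auto
qed

lemma arc_discr_pos_scaleR:
  assumes s: "0 < s" "s < 1" and w: "cmod w < 1"
    and h: "4 * s * \<bar>Im w\<bar> \<le> (1 - s^2) * (1 - (cmod w)^2)" and t: "0 \<le> t" "t < 1"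
  shows "t *\<^sub>R w \<in> PDisk" and "arc_discr s (t *\<^sub>R w) > 0"
proof -
  have n: "cmod (t *\<^sub>R w) = t * cmod w" and im: "\<bar>Im (t *\<^sub>R w)\<bar> = t * \<bar>Im w\<bar>"
    using t by (simp_all add: abs_mult)
  have tw: "cmod (t *\<^sub>R w) < 1" unfolding n using t w
    by (metis le_less_trans mult_left_le_one_le norm_ge_zero less_imp_le)
  then show "t *\<^sub>R w \<in> PDisk" unfolding PDisk_def by simp
  have sp: "0 < 1 - s^2" using s by (simp add: abs_square_less_1)
  have "1 - (t * cmod w)^2 - t * (1 - (cmod w)^2) = (1 - t) * (1 + t * (cmod w)^2)"
    by (simp add: algebra_simps power2_eq_square)
  moreover have "(1 - t) * (1 + t * (cmod w)^2) > 0" using t by (simp add: add_pos_nonneg)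
  ultimately have key: "t * (1 - (cmod w)^2) < 1 - (t * cmod w)^2" by linarith
  have "4 * s * (t * \<bar>Im w\<bar>) = t * (4 * s * \<bar>Im w\<bar>)" by simp
  also have "\<dots> \<le> t * ((1 - s^2) * (1 - (cmod w)^2))" using h t by (simp add: mult_left_mono)
  also have "\<dots> = (1 - s^2) * (t * (1 - (cmod w)^2))" by simp
  also have "\<dots> < (1 - s^2) * (1 - (t * cmod w)^2)" using key sp by simp
  finally show "arc_discr s (t *\<^sub>R w) > 0" using arc_discr_sign(1)[OF s tw] unfolding n im by simp
qed

lemma starlike_arc_discr_pos:
  assumes s: "0 < s" "s < 1" shows "starlike {w \<in> PDisk. arc_discr s w > 0}"
  unfolding starlike_def
proof (intro bexI ballI subsetI)
  show "0 \<in> {w \<in> PDisk. arc_discr s w > 0}"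
    using s by (auto simp: PDisk_def arc_discr_def power2_eq_1_iff)
  fix x y assume x: "x \<in> {w \<in> PDisk. arc_discr s w > 0}" and "y \<in> closed_segment 0 x"
  then obtain u where u: "0 \<le> u" "u \<le> 1" "y = u *\<^sub>R x" unfolding closed_segment_def by auto
  have xd: "cmod x < 1" "4 * s * \<bar>Im x\<bar> < (1 - s^2) * (1 - (cmod x)^2)"
    using x arc_discr_sign(1)[OF s] unfolding PDisk_def by auto
  show "y \<in> {w \<in> PDisk. arc_discr s w > 0}"
    using x u arc_discr_pos_scaleR[OF s xd(1) less_imp_le[OF xd(2)] u(1)] by (cases "u = 1") auto
qed

lemma arc_discr_zero_in_closure_pos:
  assumes s: "0 < s" "s < 1" and w: "w \<in> PDisk" and F: "arc_discr s w = 0"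
  shows "w \<in> closure {w \<in> PDisk. arc_discr s w > 0}"
proof -
  have wd: "cmod w < 1" using w unfolding PDisk_def by simp
  have "w \<noteq> 0" using F s by (auto simp: arc_discr_def power2_eq_1_iff)
  have "open_segment 0 w \<subseteq> {w \<in> PDisk. arc_discr s w > 0}"
  proof
    fix y assume "y \<in> open_segment 0 w"
    then obtain u where "0 < u" "u < 1" "y = u *\<^sub>R w"
      unfolding open_segment_image_interval using \<open>w \<noteq> 0\<close> by (auto simp: scaleR_conv_of_real)
    then show "y \<in> {w \<in> PDisk. arc_discr s w > 0}"
      using arc_discr_pos_scaleR[OF s wd _ less_imp_le] arc_discr_sign(2)[OF s wd] F by simp
  qed
  then have "closure (open_segment 0 w) \<subseteq> closure {w \<in> PDisk. arc_discr s w > 0}"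
    by (rule closure_mono)
  with \<open>w \<noteq> 0\<close> show ?thesis by auto
qed

lemma continuous_on_arc_discr: "continuous_on S (arc_discr s)"
  unfolding arc_discr_def[abs_def] by (intro continuous_intros)

lemma connected_component_eq_pos_set:
  fixes G :: "'a::topological_space \<Rightarrow> real"
  assumes G: "continuous_on S G" and P: "P \<in> S" "G P > 0"
    and K: "\<And>z. z \<in> S \<Longrightarrow> z \<in> K \<longleftrightarrow> G z = 0"
    and conn: "connected {z \<in> S. G z > 0}"
  shows "connected_component_set (S - K) P = {z \<in> S. G z > 0}"
proof
  let ?C = "connected_component_set (S - K) P"
  show "{z \<in> S. G z > 0} \<subseteq> ?C"
    by (rule connected_component_maximal) (use P K conn in auto)
  show "?C \<subseteq> {z \<in> S. G z > 0}"
  proof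
    fix z assume z: "z \<in> ?C"
    have CS: "?C \<subseteq> S - K" by (rule connected_component_subset)
    have "connected (G ` ?C)"
      using connected_continuous_image[OF continuous_on_subset[OF G] connected_connected_component] CS
      by blast
    moreover have "P \<in> ?C" using P K by auto
    moreover have "0 \<notin> G ` ?C" using CS K by fastforce
    ultimately have "\<not> G z \<le> 0" using z P(2) unfolding connected_iff_interval
      by (meson imageI less_imp_le)
    then have "G z > 0" by simp
    then show "z \<in> {z \<in> S. G z > 0}" using z CS by blast
  qed
qed

lemma arcs_complement_component:
  assumes l: "cmod l = 1" and P: "cmod P < 1" and s: "0 < s" "s < 1" and fP: "disk_aut l P P = 0"
    and K: "\<And>z. z \<in> PDisk \<Longrightarrow> z \<in> K \<longleftrightarrow> arc_discr s (disk_aut l P z) = 0"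
  shows "connected_component_set (PDisk - K) P = {z \<in> PDisk. arc_discr s (disk_aut l P z) > 0}"
    and "\<And>z. z \<in> PDisk - closure (connected_component_set (PDisk - K) P) \<Longrightarrow>
      arc_discr s (disk_aut l P z) < 0"
proof -
  let ?f = "disk_aut l P" and ?g = "disk_aut (cnj l) (- (l * P))"
  let ?U = "{w \<in> PDisk. arc_discr s w > 0}"
  have PDisk_ball: "PDisk = ball 0 1" unfolding PDisk_def by (auto simp: dist_norm)
  note inv = disk_aut_inverse_params[OF l P]
  have g_cont: "continuous_on (cball 0 1) ?g" using continuous_on_disk_aut[OF inv(2)] .
  have pos_set: "{z \<in> PDisk. arc_discr s (?f z) > 0} = ?g ` ?U"
    using disk_aut_preimage[OF l P] .
  have cont: "continuous_on PDisk (\<lambda>z. arc_discr s (?f z))"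
    using continuous_on_compose[OF continuous_on_subset[OF continuous_on_disk_aut[OF P]]
        continuous_on_arc_discr] unfolding PDisk_ball o_def by auto
  have pos: "arc_discr s (?f P) > 0"
    unfolding fP arc_discr_def using s by (auto simp: power2_eq_1_iff)
  have U_sub: "?U \<subseteq> cball 0 1" unfolding PDisk_def by auto
  have "connected (?g ` ?U)"
    using connected_continuous_image[OF continuous_on_subset[OF g_cont U_sub]
        starlike_imp_connected[OF starlike_arc_discr_pos[OF s]]] .
  then have "connected {z \<in> PDisk. arc_discr s (?f z) > 0}" unfolding pos_set .
  moreover have "P \<in> PDisk" using P unfolding PDisk_def by simp
  ultimately show C: "connected_component_set (PDisk - K) P = {z \<in> PDisk. arc_discr s (?f z) > 0}"
    using connected_component_eq_pos_set[OF cont _ pos K] by blast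
  fix z assume z: "z \<in> PDisk - closure (connected_component_set (PDisk - K) P)"
  have nonzero: "arc_discr s (?f z) \<noteq> 0"
  proof
    assume F: "arc_discr s (?f z) = 0"
    have fz: "?f z \<in> PDisk" using z disk_aut_in_disk[OF l P] unfolding PDisk_def by simp
    have "closure ?U \<subseteq> cball 0 1" using closure_minimal[OF U_sub] by simp
    then have "?g ` closure ?U \<subseteq> closure (?g ` ?U)"
      by (intro image_closure_subset continuous_on_subset[OF g_cont] closure_subset) auto
    then have "?g (?f z) \<in> closure (?g ` ?U)"
      using arc_discr_zero_in_closure_pos[OF s fz F] by blast
    moreover have "?g (?f z) = z" using z disk_aut_inverse[OF l P] unfolding PDisk_def by simp
    moreover have "z \<notin> closure (?g ` ?U)" using z unfolding C pos_set by blast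
    ultimately show False by simp
  qed
  have "z \<notin> connected_component_set (PDisk - K) P"
    using z closure_subset[of "connected_component_set (PDisk - K) P"] by auto
  then have "\<not> arc_discr s (?f z) > 0" using z unfolding C by simp
  with nonzero show "arc_discr s (?f z) < 0" by simp
qed

lemma angle_arcs_normal_iff:
  assumes l: "cmod l = 1" and P: "cmod P < 1" and Q: "cmod Q < 1" and s: "0 < s" "s < 1"
    and fP: "disk_aut l P P = 0" and fQ: "disk_aut l P Q = of_real s"
    and T: "cmod T1 = 1" "cmod T2 = 1" "T1 \<noteq> T2" and on: "P \<in> hline T1 T2" "Q \<in> hline T1 T2"
    and z: "z \<in> PDisk"
  shows "z \<in> angle_arcs T1 T2 (2 * arctan (exp (hdist P Q)) - pi / 2)
    \<longleftrightarrow> arc_discr s (disk_aut l P z) = 0"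
proof -
  let ?f = "disk_aut l P" and ?\<alpha> = "2 * arctan (exp (hdist P Q)) - pi / 2"
  have zd: "cmod z < 1" using z unfolding PDisk_def by simp
  have "?f T1 \<noteq> ?f T2" using disk_aut_eq_iff[OF l P] T by simp
  moreover have "?f P \<in> hline (?f T1) (?f T2)" "?f Q \<in> hline (?f T1) (?f T2)"
    using disk_aut_hline[OF l P T(1,2)] on by simp_all
  ultimately have ends: "{?f T1, ?f T2} = {1, -1}"
    using hline_through_0_and_real[OF s(1) disk_aut_on_circle[OF l P T(1)]
        disk_aut_on_circle[OF l P T(2)]] unfolding fP fQ by blast
  have "hdist P Q = hdist 0 (of_real s)" using hdist_disk_aut[OF l P P Q] fP fQ by simp
  then have \<alpha>: "0 \<le> ?\<alpha>" "?\<alpha> \<le> pi"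
    and arcs: "angle_arcs 1 (-1) ?\<alpha> = {z \<in> PDisk. arc_discr s z = 0}"
    using arc_angle_normal(2,3)[OF s] angle_arcs_normal[OF s] by simp_all
  have "angle_arcs (?f T1) (?f T2) ?\<alpha> = angle_arcs 1 (-1) ?\<alpha>"
    using ends angle_arcs_commute by (metis doubleton_eq_iff)
  then have "z \<in> angle_arcs T1 T2 ?\<alpha> \<longleftrightarrow> ?f z \<in> angle_arcs 1 (-1) ?\<alpha>"
    using disk_aut_angle_arcs_iff[OF l P T(1,2) \<alpha> zd] by simp
  then show ?thesis unfolding arcs using disk_aut_in_disk[OF l P zd] unfolding PDisk_def by simp
qed

theorem theorem2p3:
  fixes P Q R T1 T2 :: complex
  assumes "P \<in> PDisk" "Q \<in> PDisk" "R \<in> PDisk"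
    and "P \<noteq> Q" "Q \<noteq> R" "P \<noteq> R"
    and "cmod T1 = 1" "cmod T2 = 1" "T1 \<noteq> T2"
    and "P \<in> hline T1 T2" "Q \<in> hline T1 T2"
  defines "Carcs \<equiv> angle_arcs T1 T2 (2 * arctan (exp (hdist P Q)) - pi / 2)"
  defines "\<Theta> \<equiv> connected_component_set (PDisk - Carcs) P"
  defines "m \<equiv> circ_ideal_triangles P Q R"
  shows "(R \<in> \<Theta> \<longrightarrow> m = {})
       \<and> (R \<in> Carcs \<longrightarrow> finite m \<and> card m = 1)
       \<and> (R \<in> PDisk - closure \<Theta> \<longrightarrow> finite m \<and> card m = 2)"
proof -
  have Pd: "cmod P < 1" and Qd: "cmod Q < 1" and Rd: "cmod R < 1"
    using assms(1-3) unfolding PDisk_def by auto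
  obtain l s where l: "cmod l = 1" and s: "0 < s" "s < 1"
    and fP: "disk_aut l P P = 0" and fQ: "disk_aut l P Q = of_real s"
    using disk_aut_normalize[OF Pd Qd assms(4)] .
  let ?f = "disk_aut l P"
  have arcs: "z \<in> Carcs \<longleftrightarrow> arc_discr s (?f z) = 0" if "z \<in> PDisk" for z
    unfolding Carcs_def using angle_arcs_normal_iff[OF l Pd Qd s fP fQ assms(7-11) that] by blast
  have \<Theta>: "\<Theta> = {z \<in> PDisk. arc_discr s (?f z) > 0}"
    and outside: "\<And>z. z \<in> PDisk - closure \<Theta> \<Longrightarrow> arc_discr s (?f z) < 0"
    using arcs_complement_component[OF l Pd s fP arcs] unfolding \<Theta>_def by blast+
  have "bij_betw (image ?f) m (circ_ideal_triangles 0 (of_real s) (?f R))"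
    using bij_betw_disk_aut_circ_ideal_triangles[OF l Pd Pd Qd Rd] unfolding m_def fP fQ .
  then have "card m = card (circ_ideal_triangles 0 (of_real s) (?f R))"
    and "finite m \<longleftrightarrow> finite (circ_ideal_triangles 0 (of_real s) (?f R))"
    and "m = {} \<longleftrightarrow> circ_ideal_triangles 0 (of_real s) (?f R) = {}"
    by (auto simp: bij_betw_same_card bij_betw_finite bij_betw_def)
  then show ?thesis
    using card_circ_ideal_triangles_normal[OF s disk_aut_in_disk[OF l Pd Rd]]
      \<Theta> outside arcs assms(3) by auto
qed

end
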